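(* Let $n=m=1$, so that $A,B\in\mathbb{R}$ and $Q,R>0$ are scalars, and consider the setting described in the context with $q<q_c$ and an estimate $\hat q\in[0,q_c)$. Then the certainty-equivalence gain $\hat K=-(R+B^2\hat P)^{-1}AB\hat P$ mean-square stabilizes the system $x_{t+1}=Ax_t+\lambda_tBu_t$ under $u_t=\hat Kx_t$ if and only if $$Q+(1-q)R\hat K^2+(\hat q-q)(R+B^2\hat P)^{-1}A^2B^2\hat P^2>0 .$$ Moreover, if $\hat q\ge q$, this inequality holds.
   Context: Let $A\in\mathbb{R}^{n\times n}$, $B\in\mathbb{R}^{n\times m}$ with $(A,B)$ stabilizable, and let $Q\in\mathbb{R}^{n\times n}$, $R\in\mathbb{R}^{m\times m}$ be symmetric positive definite. Consider $x_{t+1}=Ax_t+\lambda_tBu_t$, $t=0,1,2,\dots$, where $x_0$ is a random vector with finite mean and covariance and $\{\lambda_t\}$ are i.i.d. Bernoulli random variables, independent of $x_0$, with $\mathcal{P}(\lambda_t=0)=q$, $\mathcal{P}(\lambda_t=1)=1-q$, $q\in(0,1)$. For $p\in[0,1)$ the modified Riccati equation with parameter $p$ is $X=Q+A^\top XA-(1-p)A^\top XB(R+B^\top XB)^{-1}B^\top XA$. The number $q_c$ is the critical loss probability: for every $p\in[0,q_c)$ this equation has a unique positive definite solution (one has $1/\prod_i|\lambda_i^u(A)|^2\le q_c\le 1/\max_i|\lambda_i^u(A)|^2$, where $\lambda_i^u(A)$ are the eigenvalues of $A$ of modulus $\ge1$). For an estimate $\hat q\in[0,q_c)$ of $q$,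 $\hat P$ denotes the positive definite solution of the modified Riccati equation with parameter $\hat q$, and $\hat K=-(R+B^\top\hat PB)^{-1}B^\top\hat PA$. The gain $\hat K$ mean-square stabilizes the system if the closed loop $x_{t+1}=(A+\lambda_tB\hat K)x_t$ satisfies $\lim_{t\to\infty}\mathbb{E}\{x_t^\top x_t\}=0$. *)

theory Defs
  imports "HOL-Probability.Probability"
begin

definition mare :: "real \<Rightarrow> real \<Rightarrow> real \<Rightarrow> real \<Rightarrow> real \<Rightarrow> real \<Rightarrow> bool" where
  "mare A B Q R p X \<longleftrightarrow>
     X = Q + A * X * A - (1 - p) * A * X * B * inverse (R + B * X * B) * B * X * A"

definition crit_prob :: "real \<Rightarrow> real \<Rightarrow> real \<Rightarrow> real \<Rightarrow> real" where
  "crit_prob A B Q R = Sup {p. 0 \<le> p \<and> p \<le> 1 \<and>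
      (\<forall>p'. 0 \<le> p' \<and> p' < p \<longrightarrow> (\<exists>!X. X > 0 \<and> mare A B Q R p' X))}"

definition mare_sol :: "real \<Rightarrow> real \<Rightarrow> real \<Rightarrow> real \<Rightarrow> real \<Rightarrow> real" where
  "mare_sol A B Q R p = (THE X. X > 0 \<and> mare A B Q R p X)"

definition ce_gain :: "real \<Rightarrow> real \<Rightarrow> real \<Rightarrow> real \<Rightarrow> real \<Rightarrow> real" where
  "ce_gain A B Q R p = - inverse (R + B * mare_sol A B Q R p * B) * B * mare_sol A B Q R p * A"

text \<open>Closed-loop state x_t on the canonical sample space
  omega = (x_0, (b_t)_t), with lambda_t = 1 iff b_t, and u_t = K x_t.\<close>
fun cl_state :: "real \<Rightarrow> real \<Rightarrow> real \<Rightarrow> real \<times> (nat \<Rightarrow> bool) \<Rightarrow> nat \<Rightarrow> real" where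
  "cl_state A B K \<omega> 0 = fst \<omega>"
| "cl_state A B K \<omega> (Suc t) =
     A * cl_state A B K \<omega> t + of_bool (snd \<omega> t) * B * (K * cl_state A B K \<omega> t)"

definition sample_space :: "real measure \<Rightarrow> real \<Rightarrow> (real \<times> (nat \<Rightarrow> bool)) measure" where
  "sample_space \<mu> q = \<mu> \<Otimes>\<^sub>M (\<Pi>\<^sub>M t\<in>UNIV. measure_pmf (bernoulli_pmf (1 - q)))"

definition ms_stabilizes :: "real \<Rightarrow> real \<Rightarrow> real \<Rightarrow> real \<Rightarrow> bool" where
  "ms_stabilizes q A B K \<longleftrightarrow>
     (\<forall>\<mu>. prob_space \<mu> \<and> sets \<mu> = sets borel \<and> integrable \<mu> (\<lambda>x. x) \<and> integrable \<mu> (\<lambda>x. x\<^sup>2) \<longrightarrow>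
        (\<lambda>t. \<integral>\<omega>. (cl_state A B K \<omega> t)\<^sup>2 \<partial>sample_space \<mu> q) \<longlonglongrightarrow> 0)"

end

theory Submission
  imports Defs
begin

text \<open>Along a sample path the closed loop is a product, x_t = x_0 \<Prod>_{s<t} (A + \<lambda>_s B K).
  Since x_0 and the \<lambda>_s are independent, E x_t^2 = \<rho>^t E x_0^2 with
  \<rho> = q A^2 + (1 - q) (A + B K)^2, so K stabilizes in mean square iff \<rho> < 1.
  For the certainty-equivalence gain, eliminating Q by the MARE with parameter qh turns the
  left-hand side of the criterion into P (1 - \<rho>), where P > 0 is the MARE solution.
  If qh \<ge> q, all terms of the criterion are nonnegative and Q > 0.\<close>

definition ms_rate :: "real \<Rightarrow> real \<Rightarrow> real \<Rightarrow> real \<Rightarrow> real" where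
  "ms_rate q A B K = q * A\<^sup>2 + (1 - q) * (A + B * K)\<^sup>2"

lemma ms_rate_nonneg: "0 \<le> q \<Longrightarrow> q \<le> 1 \<Longrightarrow> 0 \<le> ms_rate q A B K"
  by (simp add: ms_rate_def)

lemma cl_state_eq_prod:
  "cl_state A B K \<omega> t = fst \<omega> * (\<Prod>s<t. A + of_bool (snd \<omega> s) * B * K)"
  by (induction t) (auto simp: algebra_simps)

lemma measurable_cl_state:
  assumes "sets \<mu> = sets borel"
  shows "(\<lambda>\<omega>. cl_state A B K \<omega> t) \<in> borel_measurable (sample_space \<mu> q)"
proof -
  have [measurable]: "fst \<in> borel_measurable (sample_space \<mu> q)"
    unfolding sample_space_def using measurable_fst measurable_cong_sets[OF refl assms] by metis
  have [measurable]: "(\<lambda>\<omega>. snd \<omega> s) \<in> sample_space \<mu> q \<rightarrow>\<^sub>M count_space UNIV" for s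
    unfolding sample_space_def by measurable
  show ?thesis
    unfolding cl_state_eq_prod by measurable
qed

lemma nn_integral_PiM_prod_coordinates:
  fixes M :: "'a measure" and f :: "'a \<Rightarrow> ennreal"
  assumes "prob_space M" and f [measurable]: "f \<in> borel_measurable M"
  shows "(\<integral>\<^sup>+ y. (\<Prod>s<t. f (y s)) \<partial>(\<Pi>\<^sub>M s\<in>UNIV. M)) = (\<integral>\<^sup>+ x. f x \<partial>M) ^ t"
proof -
  interpret product_prob_space "\<lambda>_::nat. M" UNIV
    using assms(1) by (simp add: product_prob_space_def product_prob_space_axioms_def
        product_sigma_finite_def prob_space_imp_sigma_finite)
  have "(\<integral>\<^sup>+ y. (\<Prod>s<t. f (y s)) \<partial>(\<Pi>\<^sub>M s\<in>UNIV. M))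
      = (\<integral>\<^sup>+ z. (\<Prod>s<t. f (z s)) \<partial>distr (\<Pi>\<^sub>M s\<in>UNIV. M) (\<Pi>\<^sub>M s\<in>{..<t}. M) (\<lambda>y. restrict y {..<t}))"
    by (subst nn_integral_distr) (auto intro: measurable_restrict_subset)
  also have "\<dots> = (\<integral>\<^sup>+ z. (\<Prod>s<t. f (z s)) \<partial>(\<Pi>\<^sub>M s\<in>{..<t}. M))"
    by (simp add: distr_PiM_restrict_finite)
  also have "\<dots> = (\<Prod>s<t. \<integral>\<^sup>+ x. f x \<partial>M)"
    by (rule product_nn_integral_prod) auto
  finally show ?thesis
    by simp
qed

lemma nn_integral_bernoulli_closed_loop_sq:
  assumes "0 \<le> q" "q \<le> 1"
  shows "(\<integral>\<^sup>+ b. ennreal ((A + of_bool b * B * K)\<^sup>2) \<partial>bernoulli_pmf (1 - q))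
       = ennreal (ms_rate q A B K)"
proof -
  have "(\<integral>\<^sup>+ b. ennreal ((A + of_bool b * B * K)\<^sup>2) \<partial>bernoulli_pmf (1 - q))
      = ennreal ((A + B * K)\<^sup>2) * ennreal (1 - q) + ennreal (A\<^sup>2) * ennreal (1 - (1 - q))"
    using assms by (subst nn_integral_bernoulli_pmf) auto
  also have "\<dots> = ennreal ((1 - q) * (A + B * K)\<^sup>2 + q * A\<^sup>2)"
    using assms by (simp add: ennreal_mult'[symmetric] ennreal_plus mult.commute)
  finally show ?thesis
    by (simp add: ms_rate_def add.commute)
qed

lemma second_moment_cl_state:
  assumes \<mu>: "prob_space \<mu>" "sets \<mu> = sets borel" "integrable \<mu> (\<lambda>x. x\<^sup>2)"
    and q: "0 \<le> q" "q \<le> 1"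
  shows "(\<integral>\<omega>. (cl_state A B K \<omega> t)\<^sup>2 \<partial>sample_space \<mu> q) = ms_rate q A B K ^ t * (\<integral>x. x\<^sup>2 \<partial>\<mu>)"
proof -
  let ?PB = "\<Pi>\<^sub>M s\<in>UNIV. measure_pmf (bernoulli_pmf (1 - q))"
  let ?c = "\<lambda>b. ennreal ((A + of_bool b * B * K)\<^sup>2)"
  interpret PB: prob_space ?PB
    by (rule prob_space_PiM) (simp add: prob_space_measure_pmf)
  have [measurable]: "(\<lambda>\<omega>. cl_state A B K \<omega> t) \<in> borel_measurable (\<mu> \<Otimes>\<^sub>M ?PB)"
    using measurable_cl_state[OF \<mu>(2)] unfolding sample_space_def .
  have [measurable]: "(\<lambda>y. y s) \<in> ?PB \<rightarrow>\<^sub>M count_space UNIV" for s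
    by measurable
  have [measurable]: "(\<lambda>x. x) \<in> borel_measurable \<mu>"
    by (simp add: measurable_cong_sets[OF \<mu>(2) refl])
  have moment_nonneg: "0 \<le> (\<integral>x. x\<^sup>2 \<partial>\<mu>)"
    by (rule integral_nonneg_AE) simp
  have sq: "ennreal ((cl_state A B K (x, y) t)\<^sup>2) = ennreal (x\<^sup>2) * (\<Prod>s<t. ?c (y s))" for x y
    by (simp add: cl_state_eq_prod power_mult_distrib prod_power_distrib ennreal_mult' prod_ennreal)
  have gains: "(\<integral>\<^sup>+ y. (\<Prod>s<t. ?c (y s)) \<partial>?PB) = ennreal (ms_rate q A B K) ^ t"
    unfolding nn_integral_bernoulli_closed_loop_sq[OF q, symmetric]
    by (rule nn_integral_PiM_prod_coordinates) (simp_all add: prob_space_measure_pmf)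
  have inner: "(\<integral>\<^sup>+ y. ennreal ((cl_state A B K (x, y) t)\<^sup>2) \<partial>?PB)
      = ennreal (x\<^sup>2) * ennreal (ms_rate q A B K) ^ t" for x
    unfolding sq gains[symmetric] by (rule nn_integral_cmult) measurable
  have "(\<integral>\<omega>. (cl_state A B K \<omega> t)\<^sup>2 \<partial>sample_space \<mu> q)
      = enn2real (\<integral>\<^sup>+ \<omega>. ennreal ((cl_state A B K \<omega> t)\<^sup>2) \<partial>(\<mu> \<Otimes>\<^sub>M ?PB))"
    unfolding sample_space_def by (rule integral_eq_nn_integral) auto
  also have "(\<integral>\<^sup>+ \<omega>. ennreal ((cl_state A B K \<omega> t)\<^sup>2) \<partial>(\<mu> \<Otimes>\<^sub>M ?PB))
      = (\<integral>\<^sup>+ x. ennreal (x\<^sup>2) * ennreal (ms_rate q A B K) ^ t \<partial>\<mu>)"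
    by (simp add: PB.nn_integral_fst[symmetric] inner)
  also have "\<dots> = ennreal (\<integral>x. x\<^sup>2 \<partial>\<mu>) * ennreal (ms_rate q A B K) ^ t"
    using \<mu> by (simp add: nn_integral_multc nn_integral_eq_integral)
  finally show ?thesis
    using ms_rate_nonneg[OF q] moment_nonneg by (simp add: enn2real_mult ennreal_power)
qed

lemma ms_stabilizes_iff_ms_rate_less_1:
  assumes q: "0 \<le> q" "q \<le> 1"
  shows "ms_stabilizes q A B K \<longleftrightarrow> ms_rate q A B K < 1"
proof
  assume stab: "ms_stabilizes q A B K"
  let ?\<delta> = "return borel (1::real)"
  have meas_\<delta>: "f \<in> borel_measurable ?\<delta>" if "f \<in> borel_measurable borel" for f :: "real \<Rightarrow> real"
    using that unfolding measurable_cong_sets[OF sets_return refl] .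
  have \<delta>: "prob_space ?\<delta>" "sets ?\<delta> = sets borel" "integrable ?\<delta> (\<lambda>x. x)" "integrable ?\<delta> (\<lambda>x. x\<^sup>2)"
    by (simp_all add: prob_space_return integrable_iff_bounded meas_\<delta> nn_integral_return)
  then have "(\<lambda>t. \<integral>\<omega>. (cl_state A B K \<omega> t)\<^sup>2 \<partial>sample_space ?\<delta> q) \<longlonglongrightarrow> 0"
    using stab unfolding ms_stabilizes_def by blast
  then have "(\<lambda>t. ms_rate q A B K ^ t) \<longlonglongrightarrow> 0"
    by (simp add: second_moment_cl_state[OF \<delta>(1,2,4) q] integral_return)
  then have "\<forall>\<^sub>F t in sequentially. ms_rate q A B K ^ t < 1"
    by (rule order_tendstoD) simp
  then obtain t where "ms_rate q A B K ^ t < 1"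
    by (auto dest: eventually_happens)
  then show "ms_rate q A B K < 1"
    by (meson not_less one_le_power)
next
  assume rate: "ms_rate q A B K < 1"
  show "ms_stabilizes q A B K"
    unfolding ms_stabilizes_def
  proof (intro allI impI)
    fix \<mu> :: "real measure"
    assume "prob_space \<mu> \<and> sets \<mu> = sets borel \<and> integrable \<mu> (\<lambda>x. x) \<and> integrable \<mu> (\<lambda>x. x\<^sup>2)"
    then have "(\<lambda>t. \<integral>\<omega>. (cl_state A B K \<omega> t)\<^sup>2 \<partial>sample_space \<mu> q) = (\<lambda>t. ms_rate q A B K ^ t * (\<integral>x. x\<^sup>2 \<partial>\<mu>))"
      using second_moment_cl_state q by blast
    also have "\<dots> \<longlonglongrightarrow> 0"
      using rate ms_rate_nonneg[OF q] by (intro tendsto_mult_left_zero LIMSEQ_power_zero) simp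
    finally show "(\<lambda>t. \<integral>\<omega>. (cl_state A B K \<omega> t)\<^sup>2 \<partial>sample_space \<mu> q) \<longlonglongrightarrow> 0" .
  qed
qed

lemma ex1_pos_mare_below_crit_prob:
  assumes "0 \<le> p" "p < crit_prob A B Q R"
  shows "\<exists>!X. X > 0 \<and> mare A B Q R p X"
proof -
  define S where "S = {p. 0 \<le> p \<and> p \<le> 1 \<and>
      (\<forall>p'. 0 \<le> p' \<and> p' < p \<longrightarrow> (\<exists>!X. X > 0 \<and> mare A B Q R p' X))}"
  have "0 \<in> S"
    unfolding S_def by auto
  then have "S \<noteq> {}"
    by blast
  moreover have "p < Sup S"
    using assms(2) unfolding crit_prob_def S_def .
  ultimately obtain p' where "p' \<in> S" "p < p'"
    using less_cSupD by blast
  then have "\<forall>p''. 0 \<le> p'' \<and> p'' < p' \<longrightarrow> (\<exists>!X. X > 0 \<and> mare A B Q R p'' X)"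
    unfolding S_def by simp
  with assms(1) \<open>p < p'\<close> show ?thesis
    by blast
qed

lemma
  assumes "0 \<le> p" "p < crit_prob A B Q R"
  shows mare_sol_pos: "mare_sol A B Q R p > 0"
    and mare_mare_sol: "mare A B Q R p (mare_sol A B Q R p)"
  using theI'[OF ex1_pos_mare_below_crit_prob[OF assms]] unfolding mare_sol_def by auto

lemma mare_ce_criterion_eq:
  assumes "mare A B Q R p P" and "R + B\<^sup>2 * P \<noteq> 0"
  defines "K \<equiv> - inverse (R + B * P * B) * B * P * A"
  shows "Q + (1 - q) * R * K\<^sup>2 + (p - q) * inverse (R + B\<^sup>2 * P) * A\<^sup>2 * B\<^sup>2 * P\<^sup>2
       = P * (1 - ms_rate q A B K)"
proof -
  define s where "s = R + B\<^sup>2 * P"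
  have s: "s \<noteq> 0" "R = s - B\<^sup>2 * P" "R + B * P * B = s"
    using assms(2) unfolding s_def by (simp_all add: power2_eq_square)
  have Q: "Q = P - A\<^sup>2 * P + (1 - p) * A\<^sup>2 * B\<^sup>2 * P\<^sup>2 / s"
    using assms(1) s(1,3) unfolding mare_def by (simp add: field_simps power2_eq_square)
  show ?thesis
    unfolding K_def ms_rate_def s(3) s_def[symmetric] Q unfolding s(2)
    using s(1) by (simp add: field_simps power2_eq_square)
qed

theorem theorem1:
  fixes A B Q R q qh :: real
  assumes stabilizable: "\<exists>K. \<bar>A + B * K\<bar> < 1"
    and Q: "Q > 0" and R: "R > 0"
    and q: "0 < q" "q < 1" "q < crit_prob A B Q R"
    and qh: "0 \<le> qh" "qh < crit_prob A B Q R"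
  shows "(ms_stabilizes q A B (ce_gain A B Q R qh) \<longleftrightarrow>
           Q + (1 - q) * R * (ce_gain A B Q R qh)\<^sup>2
             + (qh - q) * inverse (R + B\<^sup>2 * mare_sol A B Q R qh) * A\<^sup>2 * B\<^sup>2 * (mare_sol A B Q R qh)\<^sup>2 > 0)
         \<and> (qh \<ge> q \<longrightarrow>
           Q + (1 - q) * R * (ce_gain A B Q R qh)\<^sup>2
             + (qh - q) * inverse (R + B\<^sup>2 * mare_sol A B Q R qh) * A\<^sup>2 * B\<^sup>2 * (mare_sol A B Q R qh)\<^sup>2 > 0)"
proof -
  \<comment> \<open>In the scalar case neither stabilizability nor q < q_c is needed.\<close>
  define P where "P = mare_sol A B Q R qh"
  define K where "K = ce_gain A B Q R qh"
  have P: "P > 0" "mare A B Q R qh P"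
    unfolding P_def using mare_sol_pos[OF qh] mare_mare_sol[OF qh] by auto
  have denom: "R + B\<^sup>2 * P > 0"
    using R P(1) by (simp add: add_pos_nonneg)
  have criterion: "Q + (1 - q) * R * K\<^sup>2 + (qh - q) * inverse (R + B\<^sup>2 * P) * A\<^sup>2 * B\<^sup>2 * P\<^sup>2
      = P * (1 - ms_rate q A B K)"
    unfolding K_def ce_gain_def P_def[symmetric] using P(2) denom by (intro mare_ce_criterion_eq) auto
  have "ms_stabilizes q A B K \<longleftrightarrow>
      Q + (1 - q) * R * K\<^sup>2 + (qh - q) * inverse (R + B\<^sup>2 * P) * A\<^sup>2 * B\<^sup>2 * P\<^sup>2 > 0"
    unfolding ms_stabilizes_iff_ms_rate_less_1[OF less_imp_le[OF q(1)] less_imp_le[OF q(2)]] criterion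
    using P(1) by (simp add: zero_less_mult_iff)
  moreover have "qh \<ge> q \<longrightarrow>
      Q + (1 - q) * R * K\<^sup>2 + (qh - q) * inverse (R + B\<^sup>2 * P) * A\<^sup>2 * B\<^sup>2 * P\<^sup>2 > 0"
    using Q R q(2) denom by (auto intro!: add_pos_nonneg mult_nonneg_nonneg)
  ultimately show ?thesis
    unfolding K_def P_def by blast
qed

end
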